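(* Define $f:[0,1]\to\mathbb{R}$ by $f(0)=0$ and, for each $n\in\mathbb{N}$ (with $\mathbb{N}=\{1,2,\dots\}$), $$f(t)=\begin{cases}\frac{1}{n+1}-(2n+1)\left(t-\frac{1}{n+1}\right), & t\in\left[\frac{1}{n+1},\frac{2}{2n+1}\right],\\ (2n+1)\left(t-\frac{2}{2n+1}\right), & t\in\left[\frac{2}{2n+1},\frac1n\right].\end{cases}$$ Then $f$ is well defined and continuous, $\sup\{|f(x)-f(y)|:x,y\in[0,1]\}=1$, and the function $\delta:[0,1)\to[0,\infty)$, $\delta(\epsilon)=\inf\{|x-y| : x,y\in[0,1],\ |f(x)-f(y)|\ge\epsilon\}$, satisfies, for every integer $n\ge 2$, $$\delta(1/n)=\frac{1}{n(2n+1)}<\frac{1}{n(2n-1)}\le\delta(\epsilon)\quad\text{for all }\epsilon\in(1/n,1).$$ In particular $\delta$ is discontinuous at each point $1/n$, $n\ge2$. *)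

theory Defs
  imports "HOL-Analysis.Analysis"
begin

text \<open>For t in (0,1] we pick
  n = floor(1/t), so that t lies in [1/(n+1), 1/n], and use the paper's formula
  for that n. That the paper's clauses are consistent (well-definedness) is
  part of the theorem, stated as: this function satisfies every clause.\<close>
definition zigzag :: "real \<Rightarrow> real" where
  "zigzag t = (if t \<le> 0 then 0 else
     (let n = real (nat \<lfloor>1 / t\<rfloor>) in
        if t \<le> 2 / (2*n+1) then 1/(n+1) - (2*n+1) * (t - 1/(n+1))
        else (2*n+1) * (t - 2/(2*n+1))))"

definition zdelta :: "real \<Rightarrow> real" where
  "zdelta \<epsilon> = Inf {\<bar>x - y\<bar> | x y. x \<in> {0..1} \<and> y \<in> {0..1} \<and> \<bar>zigzag x - zigzag y\<bar> \<ge> \<epsilon>}"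

end

theory Submission
  imports Defs
begin

(*
  The zigzag f is, on each piece [1/(k+1), 1/k], the tent t \<mapsto> |(2k+1) t - 2|: it falls
  with slope -(2k+1) from height 1/(k+1) to 0 at the valley 2/(2k+1), then rises with
  slope 2k+1 to height 1/k.  For \<epsilon> > 1/(k+1), f a > 1/(k+1) forces a to lie
     right of the valley 2/(2k+1), which yields \<delta>(\<epsilon>) \<ge> 1/((k+1)(2k+1)); for \<epsilon> = 1/n
     the bound 1/(n(2n+1)) is attained by the pair 1/n, 2/(2n+1).
  4. A function on [0,1) with a strict upward jump just right of c is not continuous at c.
*)

lemma zigzag_nonpos: "t \<le> 0 \<Longrightarrow> zigzag t = 0"
  by (simp add: zigzag_def)

lemma zigzag_pos:
  assumes "t > 0"
  shows "zigzag t = \<bar>(2 * real (nat \<lfloor>1/t\<rfloor>) + 1) * t - 2\<bar>"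
proof -
  define m where "m = real (nat \<lfloor>1/t\<rfloor>)"
  have "m \<ge> 0" by (simp add: m_def)
  then have "t \<le> 2/(2*m+1) \<longleftrightarrow> (2*m+1)*t \<le> 2"
    and "1/(m+1) - (2*m+1) * (t - 1/(m+1)) = 2 - (2*m+1)*t"
    and "(2*m+1) * (t - 2/(2*m+1)) = (2*m+1)*t - 2"
    by (simp_all add: field_simps)
  then show ?thesis
    using assms unfolding zigzag_def Let_def m_def[symmetric] by auto
qed

lemma floor_reciprocal_bounds:
  fixes t :: real
  assumes "t > 0"
  shows "real (nat \<lfloor>1/t\<rfloor>) * t \<le> 1" "1 < (real (nat \<lfloor>1/t\<rfloor>) + 1) * t"
proof -
  have m: "real (nat \<lfloor>1/t\<rfloor>) = of_int \<lfloor>1/t\<rfloor>"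
    using assms by simp
  show "real (nat \<lfloor>1/t\<rfloor>) * t \<le> 1"
    unfolding m using assms of_int_floor_le[of "1/t"] by (metis pos_le_divide_eq)
  show "1 < (real (nat \<lfloor>1/t\<rfloor>) + 1) * t"
    unfolding m using assms real_of_int_floor_add_one_gt[of "1/t"] by (metis pos_divide_less_eq)
qed

text \<open>On [1/(k+1), 1/k] the zigzag is the tent |(2k+1) t - 2|.  At the left endpoint the
  floor is k+1 rather than k, but both tents agree there.\<close>

lemma zigzag_piece:
  assumes "1/(real k + 1) \<le> t" "t \<le> 1/real k"
  shows "zigzag t = \<bar>(2 * real k + 1) * t - 2\<bar>"
proof -
  have "0 < 1/(real k + 1)" by simp
  then have t: "t > 0" using assms(1) by linarith
  define m where "m = nat \<lfloor>1/t\<rfloor>"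
  have m_le: "real m * t \<le> 1" and m_gt: "1 < (real m + 1) * t"
    using floor_reciprocal_bounds[OF t] by (simp_all add: m_def)
  have "k > 0" using assms t by (cases "k = 0") auto
  then have k_le: "real k * t \<le> 1" and k_ge: "1 \<le> (real k + 1) * t"
    using assms by (simp_all add: field_simps)
  have "real k * t < (real m + 1) * t"
    using k_le m_gt by linarith
  then have "real k < real m + 1"
    using t by simp
  moreover have "real m * t < (real k + 2) * t"
    using m_le k_ge t by (simp add: algebra_simps)
  then have "real m < real k + 2"
    using t by simp
  ultimately consider "m = k" | "m = k + 1" by linarith
  then show ?thesis
  proof cases
    case 1
    then show ?thesis using zigzag_pos[OF t] by (simp add: m_def)
  next
    case 2
    then have "(real k + 1) * t = 1" using m_le k_ge by (simp add: add.commute)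
    then show ?thesis using zigzag_pos[OF t] 2 by (simp add: m_def algebra_simps abs_if)
  qed
qed

lemma zigzag_descending_branch:
  assumes "n \<ge> 1" "1/(real n + 1) \<le> t" "t \<le> 2/(2 * real n + 1)"
  shows "zigzag t = 1/(real n + 1) - (2 * real n + 1) * (t - 1/(real n + 1))"
proof -
  have "2/(2 * real n + 1) \<le> 1/real n" and "(2 * real n + 1) * t \<le> 2"
    using assms by (auto simp: field_simps)
  moreover have "1/(real n + 1) - (2 * real n + 1) * (t - 1/(real n + 1)) = 2 - (2 * real n + 1) * t"
    by (simp add: field_simps)
  ultimately show ?thesis
    using zigzag_piece[of n t] assms by simp
qed

lemma zigzag_ascending_branch:
  assumes "n \<ge> 1" "2/(2 * real n + 1) \<le> t" "t \<le> 1/real n"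
  shows "zigzag t = (2 * real n + 1) * (t - 2/(2 * real n + 1))"
proof -
  have "1/(real n + 1) \<le> 2/(2 * real n + 1)" and "2 \<le> (2 * real n + 1) * t"
    using assms by (auto simp: field_simps)
  moreover have "(2 * real n + 1) * (t - 2/(2 * real n + 1)) = (2 * real n + 1) * t - 2"
    by (simp add: field_simps)
  ultimately show ?thesis
    using zigzag_piece[of n t] assms by simp
qed

lemma zigzag_peak: "n \<ge> 1 \<Longrightarrow> zigzag (1/real n) = 1/real n"
  using zigzag_piece[of n "1/real n"] by (simp add: field_simps abs_if)

lemma zigzag_valley: "n \<ge> 1 \<Longrightarrow> zigzag (2/(2 * real n + 1)) = 0"
  using zigzag_ascending_branch[of n "2/(2 * real n + 1)"] by (simp add: field_simps)

lemma zigzag_endpoints: "zigzag 0 = 0" "zigzag 1 = 1"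
  using zigzag_peak[of 1] zigzag_nonpos[of 0] by simp_all

lemma zigzag_nonneg: "zigzag t \<ge> 0"
  by (cases "t > 0") (simp_all add: zigzag_pos zigzag_nonpos)

lemma zigzag_le_self:
  assumes "t \<ge> 0" shows "zigzag t \<le> t"
proof (cases "t = 0")
  case False
  then have t: "t > 0" using assms by simp
  define m where "m = real (nat \<lfloor>1/t\<rfloor>)"
  have "m * t \<le> 1" "1 < (m + 1) * t"
    using floor_reciprocal_bounds[OF t] by (simp_all add: m_def)
  then show ?thesis
    unfolding zigzag_pos[OF t] m_def[symmetric] by (simp add: algebra_simps abs_if)
qed (simp add: zigzag_nonpos)

text \<open>Regularity: each tent is (2k+1)-Lipschitz, and gluing the tents for k \<le> n shows that
  the zigzag is (2n+1)-Lipschitz on [1/(n+1), 1].\<close>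

lemma zigzag_lipschitz_piece:
  "(2 * real k + 1)-lipschitz_on {1/(real k + 1)..1/real k} zigzag"
proof (rule lipschitz_onI)
  fix x y assume "x \<in> {1/(real k + 1)..1/real k}" "y \<in> {1/(real k + 1)..1/real k}"
  then have "dist (zigzag x) (zigzag y)
      = \<bar>\<bar>(2 * real k + 1) * x - 2\<bar> - \<bar>(2 * real k + 1) * y - 2\<bar>\<bar>"
    using zigzag_piece[of k x] zigzag_piece[of k y] by (simp add: dist_real_def)
  also have "\<dots> \<le> \<bar>(2 * real k + 1) * x - (2 * real k + 1) * y\<bar>"
    using abs_triangle_ineq3 by fastforce
  also have "\<dots> = (2 * real k + 1) * dist x y"
    by (simp add: dist_real_def abs_mult flip: right_diff_distrib)
  finally show "dist (zigzag x) (zigzag y) \<le> (2 * real k + 1) * dist x y" .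
qed simp

lemma zigzag_lipschitz: "(2 * real n + 1)-lipschitz_on {1/(real n + 1)..1} zigzag"
proof (induction n)
  case 0
  show ?case by simp
next
  case (Suc n)
  let ?L = "2 * real (Suc n) + 1"
  have left: "?L-lipschitz_on {1/(real (Suc n) + 1)..1/(real n + 1)} zigzag"
    using zigzag_lipschitz_piece[of "Suc n"] by (simp add: add.commute)
  have right: "?L-lipschitz_on {1/(real n + 1)..1} zigzag"
    using Suc.IH by (rule lipschitz_on_le) simp
  show ?case
    using lipschitz_on_concat[OF left right refl] by simp
qed

lemma zigzag_lipschitz_away_from_0:
  assumes "c > 0"
  obtains L where "L-lipschitz_on {c..1} zigzag"
proof -
  obtain n :: nat where "1/c < real n"
    using reals_Archimedean2 by blast
  then have "1/(real n + 1) \<le> c"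
    using assms by (simp add: field_simps)
  then have "{c..1} \<subseteq> {1/(real n + 1)..1}"
    by auto
  then show ?thesis
    using that lipschitz_on_subset[OF zigzag_lipschitz[of n]] by blast
qed

text \<open>Continuity: at 0 by the squeeze 0 \<le> f t \<le> t, elsewhere by the local Lipschitz bound.\<close>

lemma zigzag_continuous: "continuous_on {0..1} zigzag"
  unfolding continuous_on_eq_continuous_within
proof
  fix x :: real assume x: "x \<in> {0..1}"
  show "continuous (at x within {0..1}) zigzag"
  proof (cases "x = 0")
    case True
    have "(zigzag \<longlongrightarrow> 0) (at 0 within {0..1})"
    proof (rule tendsto_sandwich[of "\<lambda>_. 0" _ _ "\<lambda>t. t"])
      show "\<forall>\<^sub>F t in at 0 within {0..1}. zigzag t \<le> t"
        unfolding eventually_at_filter by (rule always_eventually) (auto intro: zigzag_le_self)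
    qed (auto simp: zigzag_nonneg intro!: tendsto_ident_at)
    then show ?thesis
      using True by (simp add: continuous_within zigzag_nonpos)
  next
    case False
    then have "x > 0" using x by simp
    then obtain L where "L-lipschitz_on {x/2..1} zigzag"
      using zigzag_lipschitz_away_from_0[of "x/2"] by auto
    then have "continuous (at x within {x/2..1}) zigzag"
      by (rule lipschitz_on_continuous_within) (use x in auto)
    moreover have "at x within {0..1} = at x within {x/2..1}"
      by (rule at_within_nhd[of _ "{x/2<..}"]) (use \<open>x > 0\<close> in auto)
    ultimately show ?thesis
      by simp
  qed
qed

lemma zigzag_oscillation:
  "Sup {\<bar>zigzag x - zigzag y\<bar> | x y. x \<in> {0..1} \<and> y \<in> {0..1}} = 1"
proof (rule cSup_eq_maximum)
  show "1 \<in> {\<bar>zigzag x - zigzag y\<bar> | x y. x \<in> {0..1} \<and> y \<in> {0..1}}"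
    using zigzag_endpoints by (intro CollectI exI[of _ 1] exI[of _ 0]) simp
next
  fix z assume "z \<in> {\<bar>zigzag x - zigzag y\<bar> | x y. x \<in> {0..1} \<and> y \<in> {0..1}}"
  then obtain x y where "z = \<bar>zigzag x - zigzag y\<bar>" "x \<in> {0..1}" "y \<in> {0..1}"
    by blast
  then show "z \<le> 1"
    using zigzag_le_self[of x] zigzag_le_self[of y] zigzag_nonneg[of x] zigzag_nonneg[of y]
    by auto
qed

text \<open>The modulus \<delta> is bounded above by any admissible pair, and bounded below by L as soon
  as every pair (a,b) with f a - f b \<ge> \<epsilon> is at least L apart (the order of a pair does not
  matter, and the pair 1, 0 makes the infimum non-vacuous for \<epsilon> \<le> 1).\<close>

lemma zdelta_le_distance:
  assumes "x \<in> {0..1}" "y \<in> {0..1}" "\<epsilon> \<le> \<bar>zigzag x - zigzag y\<bar>"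
  shows "zdelta \<epsilon> \<le> \<bar>x - y\<bar>"
  unfolding zdelta_def
proof (rule cInf_lower)
  show "\<bar>x - y\<bar> \<in> {\<bar>x - y\<bar> | x y. x \<in> {0..1} \<and> y \<in> {0..1} \<and> \<bar>zigzag x - zigzag y\<bar> \<ge> \<epsilon>}"
    using assms by blast
  show "bdd_below {\<bar>x - y\<bar> | x y. x \<in> {0..1} \<and> y \<in> {0..1} \<and> \<bar>zigzag x - zigzag y\<bar> \<ge> \<epsilon>}"
    by (rule bdd_belowI[of _ 0]) auto
qed

lemma zdelta_ge:
  assumes "\<epsilon> \<le> 1"
    and separated: "\<And>a b. a \<in> {0..1} \<Longrightarrow> b \<in> {0..1} \<Longrightarrow> \<epsilon> \<le> zigzag a - zigzag b \<Longrightarrow> L \<le> \<bar>a - b\<bar>"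
  shows "L \<le> zdelta \<epsilon>"
proof -
  let ?S = "{\<bar>x - y\<bar> | x y. x \<in> {0..1} \<and> y \<in> {0..1} \<and> \<bar>zigzag x - zigzag y\<bar> \<ge> \<epsilon>}"
  have "1 \<in> ?S"
    using zigzag_endpoints assms(1) by (intro CollectI exI[of _ 1] exI[of _ 0]) simp
  moreover have "L \<le> z" if "z \<in> ?S" for z
  proof -
    obtain x y where z: "z = \<bar>x - y\<bar>" and xy: "x \<in> {0..1}" "y \<in> {0..1}"
      and "\<epsilon> \<le> \<bar>zigzag x - zigzag y\<bar>"
      using \<open>z \<in> ?S\<close> by blast
    then consider "\<epsilon> \<le> zigzag x - zigzag y" | "\<epsilon> \<le> zigzag y - zigzag x"
      by linarith
    then show "L \<le> z"
      using separated[of x y] separated[of y x] xy unfolding z by cases (auto simp: abs_minus_commute)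
  qed
  ultimately show ?thesis
    unfolding zdelta_def by (intro cInf_greatest) auto
qed

text \<open>Separation: a rise of \<epsilon> from b up to a point a \<ge> 1/(n+1) needs horizontal distance
  \<epsilon>/(2n+1) (Lipschitz bound) unless b lies left of 1/(n+1).\<close>

lemma zigzag_separation:
  assumes "1/(real n + 1) \<le> a" "a \<le> 1" "b \<in> {0..1}" "\<epsilon> \<le> zigzag a - zigzag b"
  shows "min (\<epsilon>/(2 * real n + 1)) (a - 1/(real n + 1)) \<le> \<bar>a - b\<bar>"
proof (cases "1/(real n + 1) \<le> b")
  case True
  have "dist (zigzag a) (zigzag b) \<le> (2 * real n + 1) * dist a b"
    by (rule lipschitz_onD[OF zigzag_lipschitz]) (use assms True in auto)
  then have "\<epsilon> \<le> (2 * real n + 1) * \<bar>a - b\<bar>"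
    using assms(4) by (simp add: dist_real_def)
  then have "\<epsilon>/(2 * real n + 1) \<le> \<bar>a - b\<bar>"
    by (simp add: divide_le_eq mult.commute)
  then show ?thesis by linarith
next
  case False
  then show ?thesis using assms(1) by linarith
qed

lemma zigzag_rise:
  assumes "k \<ge> 1" "1/(real k + 1) < zigzag a"
  shows "2/(2 * real k + 1) \<le> a"
proof -
  have "a > 0"
    using assms zigzag_nonpos[of a] by (cases "a > 0") auto
  then have above: "1/(real k + 1) < a"
    using assms zigzag_le_self[of a] by linarith
  show ?thesis
  proof (cases "1/real k \<le> a")
    case True
    moreover have "2/(2 * real k + 1) \<le> 1/real k"
      using assms(1) by (simp add: field_simps)
    ultimately show ?thesis by linarith
  next
    case False
    then have "zigzag a = \<bar>(2 * real k + 1) * a - 2\<bar>"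
      using zigzag_piece[of k a] above by simp
    moreover have "(2 * real k + 1) * (1/(real k + 1)) < (2 * real k + 1) * a"
      using above by (intro mult_strict_left_mono) auto
    then have "2 - (2 * real k + 1) * a < 1/(real k + 1)"
      by (simp add: field_simps)
    ultimately have "0 < (2 * real k + 1) * a - 2"
      using assms(2) by (simp add: abs_if split: if_splits)
    then show ?thesis
      by (simp add: field_simps)
  qed
qed

text \<open>The modulus at the level 1/n: the peak 1/n and the valley 2/(2n+1) realise it, and any
  pair rising by 1/n has its upper point at or right of 1/n.\<close>

lemma zdelta_at_reciprocal:
  assumes "n \<ge> 1"
  shows "zdelta (1/real n) = 1/(real n * (2 * real n + 1))"
proof (rule antisym)
  have "\<bar>1/real n - 2/(2 * real n + 1)\<bar> = 1/(real n * (2 * real n + 1))"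
    using assms by (simp add: field_simps)
  moreover have "1/real n \<in> {0..1}" "2/(2 * real n + 1) \<in> {0..1}"
    using assms by (auto simp: field_simps)
  ultimately show "zdelta (1/real n) \<le> 1/(real n * (2 * real n + 1))"
    using zdelta_le_distance[of "1/real n" "2/(2 * real n + 1)"] zigzag_peak zigzag_valley assms
    by simp
next
  show "1/(real n * (2 * real n + 1)) \<le> zdelta (1/real n)"
  proof (rule zdelta_ge)
    fix a b assume a: "a \<in> {0..1}" and b: "b \<in> {0..1}" and rise: "1/real n \<le> zigzag a - zigzag b"
    then have "1/real n \<le> a"
      using zigzag_le_self[of a] zigzag_nonneg[of b] by auto
    moreover have "1/(real n * (2 * real n + 1)) \<le> 1/(real n * (real n + 1))"
      using assms by (intro divide_left_mono mult_left_mono) auto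
    moreover have "1/(real n * (real n + 1)) = 1/real n - 1/(real n + 1)"
      using assms by (simp add: field_simps)
    moreover have "1/(real n + 1) \<le> 1/real n"
      using assms by (simp add: field_simps)
    moreover have "min ((1/real n)/(2 * real n + 1)) (a - 1/(real n + 1)) \<le> \<bar>a - b\<bar>"
      using zigzag_separation[of n a b "1/real n"] a b rise calculation by auto
    ultimately show "1/(real n * (2 * real n + 1)) \<le> \<bar>a - b\<bar>"
      by (simp add: min_def split: if_splits)
  qed (use assms in simp)
qed

text \<open>Just above the level 1/n the modulus jumps up to at least 1/(n(2n-1)): a rise of more
  than 1/n = 1/(k+1) must start from a point right of the valley 2/(2k+1).\<close>

lemma zdelta_above_reciprocal:
  assumes "n \<ge> 2" "1/real n < \<epsilon>" "\<epsilon> < 1"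
  shows "1/(real n * (2 * real n - 1)) \<le> zdelta \<epsilon>"
proof -
  obtain k where n: "n = Suc k" and k: "k \<ge> 1"
    using assms(1) by (cases n) auto
  have "1/((real k + 1) * (2 * real k + 1)) \<le> zdelta \<epsilon>"
  proof (rule zdelta_ge)
    fix a b assume a: "a \<in> {0..1}" and b: "b \<in> {0..1}" and rise: "\<epsilon> \<le> zigzag a - zigzag b"
    then have "1/(real k + 1) < zigzag a"
      using assms n zigzag_nonneg[of b] by (simp add: add.commute)
    then have "2/(2 * real k + 1) \<le> a"
      by (rule zigzag_rise[OF k])
    moreover have "2/(2 * real k + 1) - 1/(real k + 1) = 1/((real k + 1) * (2 * real k + 1))"
      by (simp add: field_simps)
    moreover have "(1/(real k + 1))/(2 * real k + 1) \<le> \<epsilon>/(2 * real k + 1)"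
      using assms(2) n by (intro divide_right_mono) (auto simp: add.commute)
    moreover have "1/(real k + 1) \<le> 2/(2 * real k + 1)"
      by (simp add: field_simps)
    ultimately show "1/((real k + 1) * (2 * real k + 1)) \<le> \<bar>a - b\<bar>"
      using zigzag_separation[of k a b \<epsilon>] a b rise by (auto simp: min_def split: if_splits)
  qed (use assms in simp)
  moreover have "real n * (2 * real n - 1) = (real k + 1) * (2 * real k + 1)"
    unfolding n by (simp add: algebra_simps)
  ultimately show ?thesis
    by simp
qed

lemma not_continuous_at_upward_jump:
  fixes g :: "real \<Rightarrow> real"
  assumes c: "0 \<le> c" "c < 1"
    and below: "g c < L" and above: "\<And>e. c < e \<Longrightarrow> e < 1 \<Longrightarrow> L \<le> g e"
  shows "\<not> continuous (at c within {0..<1}) g"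
proof
  assume "continuous (at c within {0..<1}) g"
  then have "(g \<longlongrightarrow> g c) (at c within {0..<1})"
    by (simp add: continuous_within)
  then have lim: "(g \<longlongrightarrow> g c) (at c within {c<..<1})"
    by (rule tendsto_within_subset) (use c in auto)
  have right: "at c within {c<..<1} = at_right c"
    by (rule at_within_nhd[of _ "{..<1}"]) (use c in auto)
  have "L \<le> g c"
  proof (rule tendsto_lowerbound[OF lim])
    show "\<forall>\<^sub>F e in at c within {c<..<1}. L \<le> g e"
      unfolding eventually_at_filter by (rule always_eventually) (auto intro: above)
    show "\<not> trivial_limit (at c within {c<..<1})"
      unfolding right by simp
  qed
  with below show False by simp
qed

theorem mainTheorem5:
  shows "zigzag 0 = 0
    \<and> (\<forall>n::nat. n \<ge> 1 \<longrightarrow>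
          (\<forall>t. 1/(real n+1) \<le> t \<and> t \<le> 2/(2*real n+1) \<longrightarrow>
               zigzag t = 1/(real n+1) - (2*real n+1) * (t - 1/(real n+1)))
        \<and> (\<forall>t. 2/(2*real n+1) \<le> t \<and> t \<le> 1/real n \<longrightarrow>
               zigzag t = (2*real n+1) * (t - 2/(2*real n+1))))
    \<and> continuous_on {0..1} zigzag
    \<and> Sup {\<bar>zigzag x - zigzag y\<bar> | x y. x \<in> {0..1} \<and> y \<in> {0..1}} = 1
    \<and> (\<forall>\<epsilon>\<in>{0..<1}. zdelta \<epsilon> \<ge> 0)
    \<and> (\<forall>n::nat. n \<ge> 2 \<longrightarrow>
          zdelta (1/real n) = 1/(real n*(2*real n+1))
        \<and> 1/(real n*(2*real n+1)) < 1/(real n*(2*real n-1))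
        \<and> (\<forall>\<epsilon>. 1/real n < \<epsilon> \<and> \<epsilon> < 1 \<longrightarrow> 1/(real n*(2*real n-1)) \<le> zdelta \<epsilon>)
        \<and> \<not> continuous (at (1/real n) within {0..<1}) zdelta)"
proof (intro conjI allI impI ballI)
  show "zigzag 0 = 0" by (rule zigzag_endpoints)
  show "continuous_on {0..1} zigzag" by (rule zigzag_continuous)
  show "Sup {\<bar>zigzag x - zigzag y\<bar> | x y. x \<in> {0..1} \<and> y \<in> {0..1}} = 1"
    by (rule zigzag_oscillation)
  show "zdelta \<epsilon> \<ge> 0" if "\<epsilon> \<in> {0..<1}" for \<epsilon>
    using that by (intro zdelta_ge) auto
  fix n :: nat
  show "zigzag t = 1/(real n+1) - (2*real n+1) * (t - 1/(real n+1))"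
    if "n \<ge> 1" "1/(real n+1) \<le> t \<and> t \<le> 2/(2*real n+1)" for t
    using zigzag_descending_branch that by blast
  show "zigzag t = (2*real n+1) * (t - 2/(2*real n+1))"
    if "n \<ge> 1" "2/(2*real n+1) \<le> t \<and> t \<le> 1/real n" for t
    using zigzag_ascending_branch that by blast
  assume n: "n \<ge> 2"
  show level: "zdelta (1/real n) = 1/(real n*(2*real n+1))"
    using zdelta_at_reciprocal n by simp
  show gap: "1/(real n*(2*real n+1)) < 1/(real n*(2*real n-1))"
    using n by (intro divide_strict_left_mono mult_strict_left_mono mult_pos_pos) auto
  show "1/(real n*(2*real n-1)) \<le> zdelta \<epsilon>" if "1/real n < \<epsilon> \<and> \<epsilon> < 1" for \<epsilon>
    using zdelta_above_reciprocal n that by blast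
  show "\<not> continuous (at (1/real n) within {0..<1}) zdelta"
    using n level gap zdelta_above_reciprocal[OF n]
    by (intro not_continuous_at_upward_jump) auto
qed

end
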